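(* Let $n\ge 3$ and let $(\mathbf{r},\mathbf{d})$ be an arithmetical structure on the cycle $C_n$ with vertices $v_1,\ldots,v_n$ in cyclic order and $\mathbf{r}=(r_1,\ldots,r_n)$ (indices mod $n$). Then $|\mathcal{K}(C_n;\mathbf{r})|=\sum_{i=1}^n \frac{1}{r_ir_{i+1}}$, and this quantity is a positive integer $k\le n$ equal to the number of vertices of the cycle $C_k$ obtained by repeatedly smoothing (removing a degree-$2$ vertex $v_i$ with $r_i=r_{i-1}+r_{i+1}$ and joining its neighbors) until the Laplacian structure $\mathbf{r}=\mathbf{1}$ is reached.
   Context: The adjacency matrix $A$ of $C_n$ has $a_{i,j}=1$ iff $v_i,v_j$ are consecutive. An arithmetical structure is a pair $(\mathbf{r},\mathbf{d})$ with $\mathbf{d}\in\mathbb{Z}_{\ge0}^n$ and $\mathbf{r}\in\mathbb{Z}_{>0}^n$ having entries with gcd $1$ and $(\mathrm{diag}(\mathbf{d})-A)\mathbf{r}=\mathbf{0}$, i.e. $r_i\mid r_{i-1}+r_{i+1}$ for all $i$. $\mathcal{K}(C_n;\mathbf{r})$ is the torsion subgroup of $\mathbb{Z}^n/(\mathrm{diag}(\mathbf{d})-A)\mathbb{Z}^n$. Smoothing may produce $C_2$ (two vertices, two parallel edges) as an intermediate or final cycle. *)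

theory Defs
  imports Complex_Main
begin

text \<open>Vertices of the cycle C_n are 0,...,n-1 (v_{i+1} in the paper is vertex i);
  indices are taken mod n.\<close>

definition cyc_prev :: "nat \<Rightarrow> nat \<Rightarrow> nat" where
  "cyc_prev n i = (i + n - 1) mod n"

definition cyc_next :: "nat \<Rightarrow> nat \<Rightarrow> nat" where
  "cyc_next n i = (Suc i) mod n"

definition arith_struct :: "nat \<Rightarrow> (nat \<Rightarrow> nat) \<Rightarrow> (nat \<Rightarrow> nat) \<Rightarrow> bool" where
  "arith_struct n r d \<longleftrightarrow>
     (\<forall>i<n. 0 < r i) \<and> Gcd (r ` {..<n}) = 1 \<and>
     (\<forall>i<n. d i * r i = r (cyc_prev n i) + r (cyc_next n i))"

text \<open>Integer vectors in Z^n, represented as functions vanishing outside {0..<n}.\<close>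

definition int_vecs :: "nat \<Rightarrow> (nat \<Rightarrow> int) set" where
  "int_vecs n = {x. \<forall>i\<ge>n. x i = 0}"

definition cyc_mat_apply :: "nat \<Rightarrow> (nat \<Rightarrow> nat) \<Rightarrow> (nat \<Rightarrow> int) \<Rightarrow> (nat \<Rightarrow> int)" where
  "cyc_mat_apply n d x = (\<lambda>i. if i < n then int (d i) * x i - x (cyc_prev n i) - x (cyc_next n i) else 0)"

definition cyc_image :: "nat \<Rightarrow> (nat \<Rightarrow> nat) \<Rightarrow> (nat \<Rightarrow> int) set" where
  "cyc_image n d = cyc_mat_apply n d ` int_vecs n"

definition torsion_reps :: "nat \<Rightarrow> (nat \<Rightarrow> nat) \<Rightarrow> (nat \<Rightarrow> int) set" where
  "torsion_reps n d = {x \<in> int_vecs n. \<exists>m::int. 0 < m \<and> (\<lambda>i. m * x i) \<in> cyc_image n d}"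

text \<open>The torsion subgroup K(C_n; r), as the set of cosets of the image lattice
  that consist of torsion elements.\<close>

definition critical_group :: "nat \<Rightarrow> (nat \<Rightarrow> nat) \<Rightarrow> (nat \<Rightarrow> int) set set" where
  "critical_group n d = torsion_reps n d //
     {(x, y). x \<in> torsion_reps n d \<and> y \<in> torsion_reps n d \<and> (\<lambda>i. x i - y i) \<in> cyc_image n d}"

text \<open>One smoothing step on a cycle given by its cyclic list of r-values
  (lengths >= 2; length 2 is C_2 with two parallel edges, where both neighbours of a
  vertex are the other vertex): remove a vertex i with r_i = r_{i-1} + r_{i+1}.\<close>

definition smooth_step :: "nat list \<Rightarrow> nat list \<Rightarrow> bool" where
  "smooth_step xs ys \<longleftrightarrow> 2 \<le> length xs \<and>
     (\<exists>i<length xs. xs ! i = xs ! cyc_prev (length xs) i + xs ! cyc_next (length xs) i \<and>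
        ys = take i xs @ drop (Suc i) xs)"

end

theory Submission
  imports Defs
begin

text \<open>
  Let \<open>k = (\<Sum>i<n. 1 / (r i * r (i + 1)))\<close>. Smoothing a vertex of value \<open>a + b\<close> between
  neighbours \<open>a\<close> and \<open>b\<close> does not change \<open>k\<close>, because \<open>1/(a(a+b)) + 1/((a+b)b) = 1/(ab)\<close>. While
  some entry exceeds \<open>1\<close>, a largest entry next to a smaller one divides, hence equals, the sum of
  its neighbours and can be smoothed; otherwise all entries are equal, hence \<open>1\<close> by the gcd
  condition. So smoothing ends in an all-ones cycle of length \<open>k\<close>, and some \<open>r p = 1\<close>.

  Relabel so that \<open>r 0 = 1\<close> and unroll the cycle into the path \<open>0, \<dots>, n\<close>. The continuants
  \<open>C 0 = 0\<close>, \<open>C 1 = 1\<close>, \<open>C (j + 1) = d j * C j - C (j - 1)\<close> satisfy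
  \<open>r j * C (j + 1) - r (j + 1) * C j = 1\<close>, so \<open>C n = k\<close>. The torsion elements are the vectors
  orthogonal to \<open>r\<close>; on them \<open>y \<mapsto> (\<Sum>j<n. C j * y j) mod k\<close> has exactly the image of
  \<open>diag(d) - A\<close> as its kernel, and it maps \<open>e\<^sub>1 - r 1 * e\<^sub>0\<close> to \<open>1\<close>. Hence the critical group is
  cyclic of order \<open>k\<close>.
\<close>

lemma card_quotient_bij_betw:
  assumes f: "bij_betw f A B" and R: "R \<subseteq> A \<times> A" and S: "S \<subseteq> B \<times> B"
    and rel: "\<And>x y. x \<in> A \<Longrightarrow> y \<in> A \<Longrightarrow> (x, y) \<in> R \<longleftrightarrow> (f x, f y) \<in> S"
  shows "card (A // R) = card (B // S)"
proof -
  have S_class: "S `` {f x} = f ` (R `` {x})" if "x \<in> A" for x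
  proof -
    have "S `` {f x} = f ` {y \<in> A. (f x, f y) \<in> S}"
      using f S unfolding bij_betw_def by blast
    also have "\<dots> = f ` (R `` {x})" using rel[OF that] R by blast
    finally show ?thesis .
  qed
  have "B // S = image f ` (A // R)"
  proof -
    have "B // S = (\<Union>x\<in>A. {S `` {f x}})"
      using f unfolding quotient_def bij_betw_def by blast
    also have "\<dots> = image f ` (A // R)"
      unfolding quotient_def by (auto simp: S_class)
    finally show ?thesis .
  qed
  moreover have "inj_on (image f) (A // R)"
    using f R by (intro inj_on_subset[OF inj_on_image_Pow]) (auto simp: bij_betw_def quotient_def)
  ultimately show ?thesis by (simp add: card_image)
qed

lemma card_quotient_eq_card_image:
  assumes R: "R \<subseteq> A \<times> A" and rel: "\<And>x y. x \<in> A \<Longrightarrow> y \<in> A \<Longrightarrow> (x, y) \<in> R \<longleftrightarrow> f x = f y"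
  shows "card (A // R) = card (f ` A)"
proof -
  have R_class: "R `` {x} = {y \<in> A. f y = f x}" if "x \<in> A" for x
  proof (intro set_eqI iffI)
    fix y assume "y \<in> R `` {x}"
    then show "y \<in> {y \<in> A. f y = f x}" using R rel[OF that] by auto
  next
    fix y assume "y \<in> {y \<in> A. f y = f x}"
    then show "y \<in> R `` {x}" using rel[OF that] by auto
  qed
  have "bij_betw (\<lambda>b. {x \<in> A. f x = b}) (f ` A) (A // R)"
  proof (rule bij_betw_imageI)
    show "inj_on (\<lambda>b. {x \<in> A. f x = b}) (f ` A)"
    proof (rule inj_onI)
      fix b c assume "b \<in> f ` A" and eq: "{x \<in> A. f x = b} = {x \<in> A. f x = c}"
      then obtain a where "a \<in> A" "f a = b" by blast
      then have "a \<in> {x \<in> A. f x = c}" using eq by blast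
      then show "b = c" using \<open>f a = b\<close> by simp
    qed
    show "(\<lambda>b. {x \<in> A. f x = b}) ` f ` A = A // R"
      by (auto simp: quotient_def R_class)
  qed
  then show ?thesis by (simp add: bij_betw_same_card)
qed

lemma cyc_next_less: "0 < n \<Longrightarrow> cyc_next n i < n"
  by (simp add: cyc_next_def)

lemma cyc_prev_less: "0 < n \<Longrightarrow> cyc_prev n i < n"
  by (simp add: cyc_prev_def)

lemma cyc_next_prev: "i < n \<Longrightarrow> cyc_next n (cyc_prev n i) = i"
  by (simp add: cyc_next_def cyc_prev_def mod_Suc_eq)

lemma cyc_prev_next: "i < n \<Longrightarrow> cyc_prev n (cyc_next n i) = i"
proof -
  assume "i < n"
  then have "cyc_prev n (cyc_next n i) = (Suc i mod n + (n - 1)) mod n"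
    by (simp add: cyc_next_def cyc_prev_def)
  also have "\<dots> = (Suc i + (n - 1)) mod n"
    by (simp add: mod_add_left_eq)
  also have "Suc i + (n - 1) = i + n"
    using \<open>i < n\<close> by simp
  finally show ?thesis using \<open>i < n\<close> by simp
qed

lemma cyc_prev_pos: "0 < i \<Longrightarrow> i < n \<Longrightarrow> cyc_prev n i = i - 1"
  using mod_add_self2[of "i - 1" n] by (simp add: cyc_prev_def)

lemma cyc_prev_0: "0 < n \<Longrightarrow> cyc_prev n 0 = n - 1"
  by (simp add: cyc_prev_def)

lemma cyc_next_Suc: "Suc i < n \<Longrightarrow> cyc_next n i = Suc i"
  by (simp add: cyc_next_def)

lemma cyc_next_last: "Suc i = n \<Longrightarrow> cyc_next n i = 0"
  by (simp add: cyc_next_def)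

lemma cyc_next_add_mod: "cyc_next n ((p + i) mod n) = (p + cyc_next n i) mod n"
  by (simp add: cyc_next_def mod_Suc_eq mod_add_right_eq)

lemma cyc_prev_add_mod: "0 < n \<Longrightarrow> cyc_prev n ((p + i) mod n) = (p + cyc_prev n i) mod n"
proof -
  assume n: "0 < n"
  have "cyc_prev n ((p + i) mod n) = ((p + i) mod n + (n - 1)) mod n"
    using n by (simp add: cyc_prev_def)
  also have "\<dots> = (p + (i + (n - 1)) mod n) mod n"
    by (simp only: mod_add_left_eq mod_add_right_eq add.assoc)
  finally show ?thesis using n by (simp add: cyc_prev_def)
qed

lemma bij_betw_cyc_next: "0 < n \<Longrightarrow> bij_betw (cyc_next n) {..<n} {..<n}"
  by (rule bij_betw_byWitness[where f' = "cyc_prev n"])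
     (auto simp: cyc_prev_next cyc_next_prev cyc_next_less cyc_prev_less)

lemma sum_cyc_next: "0 < n \<Longrightarrow> (\<Sum>i<n. f (cyc_next n i)) = (\<Sum>i<n. f i)"
  using sum.reindex_bij_betw[OF bij_betw_cyc_next] by blast

lemma add_mod_inverse: "0 < (n::nat) \<Longrightarrow> (p + (n - p mod n)) mod n = 0"
  by (metis le_add_diff_inverse mod_add_left_eq mod_less_divisor mod_self
      order.strict_implies_order)

lemma sum_add_mod: "0 < (n::nat) \<Longrightarrow> (\<Sum>i<n. f ((p + i) mod n)) = (\<Sum>i<n. f i)"
proof (rule sum.reindex_bij_betw, rule bij_betw_byWitness[where f' = "\<lambda>i. (i + (n - p mod n)) mod n"])
  assume n: "0 < n"
  have "((p + i) mod n + (n - p mod n)) mod n = i mod n" for i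
    using add_mod_inverse[OF n, of p]
    by (metis add.assoc add.commute mod_add_left_eq mod_add_right_eq add_0)
  then show "\<forall>i\<in>{..<n}. ((p + i) mod n + (n - p mod n)) mod n = i"
    by (metis lessThan_iff mod_less)
  have "(p + (i + (n - p mod n)) mod n) mod n = i mod n" for i
    using add_mod_inverse[OF n, of p]
    by (metis add.assoc add.commute mod_add_left_eq mod_add_right_eq add_0)
  then show "\<forall>i\<in>{..<n}. (p + (i + (n - p mod n)) mod n) mod n = i"
    by (metis lessThan_iff mod_less)
qed auto

lemma sum_mult_cyc_mat_apply:
  assumes "0 < n"
  shows "(\<Sum>i<n. w i * cyc_mat_apply n d x i) =
         (\<Sum>i<n. x i * (int (d i) * w i - w (cyc_prev n i) - w (cyc_next n i)))"
proof -
  have prev_sum: "(\<Sum>i<n. w i * x (cyc_prev n i)) = (\<Sum>i<n. w (cyc_next n i) * x i)"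
    using sum_cyc_next[OF assms, of "\<lambda>i. w i * x (cyc_prev n i)"]
    by (simp add: cyc_prev_next)
  have next_sum: "(\<Sum>i<n. w i * x (cyc_next n i)) = (\<Sum>i<n. w (cyc_prev n i) * x i)"
    using sum_cyc_next[OF assms, of "\<lambda>i. w (cyc_prev n i) * x i"]
    by (simp add: cyc_prev_next)
  show ?thesis
    by (simp add: cyc_mat_apply_def algebra_simps sum_subtractf sum.distrib prev_sum next_sum)
qed

lemma sum_mult_cyc_mat_apply_eq_0:
  assumes "0 < n" and "\<And>i. i < n \<Longrightarrow> int (d i) * w i = w (cyc_prev n i) + w (cyc_next n i)"
  shows "(\<Sum>i<n. w i * cyc_mat_apply n d x i) = 0"
  unfolding sum_mult_cyc_mat_apply[OF assms(1)] using assms(2) by (simp add: sum.neutral)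

section \<open>Relabelling the cycle\<close>

definition cyc_rotate :: "nat \<Rightarrow> nat \<Rightarrow> (nat \<Rightarrow> int) \<Rightarrow> nat \<Rightarrow> int" where
  "cyc_rotate n p x = (\<lambda>j. if j < n then x ((p + j) mod n) else 0)"

lemma cyc_rotate_in_int_vecs: "cyc_rotate n p x \<in> int_vecs n"
  by (simp add: cyc_rotate_def int_vecs_def)

lemma cyc_rotate_rotate: "cyc_rotate n q (cyc_rotate n p x) = cyc_rotate n (p + q) x"
  by (auto simp: cyc_rotate_def mod_add_right_eq add.assoc)

lemma cyc_rotate_mod_0: "x \<in> int_vecs n \<Longrightarrow> p mod n = 0 \<Longrightarrow> cyc_rotate n p x = x"
  by (auto simp: cyc_rotate_def int_vecs_def mod_add_left_eq[of p, symmetric])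

lemma cyc_rotate_diff:
  "cyc_rotate n p (\<lambda>i. x i - y i) = (\<lambda>i. cyc_rotate n p x i - cyc_rotate n p y i)"
  by (auto simp: cyc_rotate_def)

lemma cyc_rotate_scale: "cyc_rotate n p (\<lambda>i. m * x i) = (\<lambda>i. m * cyc_rotate n p x i)"
  by (auto simp: cyc_rotate_def)

lemma cyc_mat_apply_rotate:
  "0 < n \<Longrightarrow> cyc_mat_apply n (\<lambda>j. d ((p + j) mod n)) (cyc_rotate n p x) =
     cyc_rotate n p (cyc_mat_apply n d x)"
  by (auto simp: cyc_mat_apply_def cyc_rotate_def cyc_prev_less cyc_next_less
      cyc_prev_add_mod cyc_next_add_mod)

lemma cyc_rotate_left_inverse:
  assumes "0 < n" and "x \<in> int_vecs n"
  shows "cyc_rotate n (n - p mod n) (cyc_rotate n p x) = x"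
proof -
  have "(p + (n - p mod n)) mod n = 0" by (rule add_mod_inverse[OF assms(1)])
  then show ?thesis by (simp only: cyc_rotate_rotate cyc_rotate_mod_0[OF assms(2)])
qed

lemma cyc_rotate_right_inverse:
  assumes "0 < n" and "x \<in> int_vecs n"
  shows "cyc_rotate n p (cyc_rotate n (n - p mod n) x) = x"
proof -
  have "(n - p mod n + p) mod n = 0" using add_mod_inverse[OF assms(1)] by (simp only: add.commute)
  then show ?thesis by (simp only: cyc_rotate_rotate cyc_rotate_mod_0[OF assms(2)])
qed

lemma cyc_mat_apply_in_int_vecs: "cyc_mat_apply n d x \<in> int_vecs n"
  by (simp add: cyc_mat_apply_def int_vecs_def)

lemma cyc_rotate_mem_cyc_image_iff:
  assumes n: "0 < n" and x: "x \<in> int_vecs n"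
  shows "cyc_rotate n p x \<in> cyc_image n (\<lambda>j. d ((p + j) mod n)) \<longleftrightarrow> x \<in> cyc_image n d"
proof
  let ?q = "n - p mod n"
  assume "cyc_rotate n p x \<in> cyc_image n (\<lambda>j. d ((p + j) mod n))"
  then obtain z where z: "z \<in> int_vecs n"
    and xz: "cyc_rotate n p x = cyc_mat_apply n (\<lambda>j. d ((p + j) mod n)) z"
    by (auto simp: cyc_image_def)
  have "z = cyc_rotate n p (cyc_rotate n ?q z)"
    using cyc_rotate_right_inverse[OF n z] by simp
  then have "cyc_rotate n p x = cyc_rotate n p (cyc_mat_apply n d (cyc_rotate n ?q z))"
    using xz cyc_mat_apply_rotate[OF n] by metis
  then have "x = cyc_mat_apply n d (cyc_rotate n ?q z)"
    using cyc_rotate_left_inverse[OF n] x cyc_mat_apply_in_int_vecs by metis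
  then show "x \<in> cyc_image n d"
    using cyc_rotate_in_int_vecs by (auto simp: cyc_image_def)
next
  assume "x \<in> cyc_image n d"
  then obtain z where "z \<in> int_vecs n" "x = cyc_mat_apply n d z"
    by (auto simp: cyc_image_def)
  then show "cyc_rotate n p x \<in> cyc_image n (\<lambda>j. d ((p + j) mod n))"
    using cyc_mat_apply_rotate[OF n] cyc_rotate_in_int_vecs
    by (metis cyc_image_def image_eqI)
qed

lemma cyc_rotate_mem_torsion_reps_iff:
  assumes "0 < n" and "x \<in> int_vecs n"
  shows "cyc_rotate n p x \<in> torsion_reps n (\<lambda>j. d ((p + j) mod n)) \<longleftrightarrow> x \<in> torsion_reps n d"
proof -
  have "(\<lambda>i. m * x i) \<in> int_vecs n" for m
    using assms(2) by (simp add: int_vecs_def)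
  then show ?thesis
    using assms cyc_rotate_mem_cyc_image_iff[OF assms(1)]
    by (simp add: torsion_reps_def cyc_rotate_in_int_vecs flip: cyc_rotate_scale)
qed

lemma card_critical_group_rotate:
  assumes n: "0 < n"
  shows "card (critical_group n (\<lambda>j. d ((p + j) mod n))) = card (critical_group n d)"
proof -
  let ?d' = "\<lambda>j. d ((p + j) mod n)" and ?q = "n - p mod n"
  have T: "torsion_reps n d \<subseteq> int_vecs n" "torsion_reps n ?d' \<subseteq> int_vecs n"
    by (auto simp: torsion_reps_def)
  have "bij_betw (cyc_rotate n p) (torsion_reps n d) (torsion_reps n ?d')"
  proof (rule bij_betw_byWitness[where f' = "cyc_rotate n ?q"])
    show "\<forall>x\<in>torsion_reps n d. cyc_rotate n ?q (cyc_rotate n p x) = x"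
      using T cyc_rotate_left_inverse[OF n] by blast
    show "\<forall>y\<in>torsion_reps n ?d'. cyc_rotate n p (cyc_rotate n ?q y) = y"
      using T cyc_rotate_right_inverse[OF n] by blast
    show "cyc_rotate n p ` torsion_reps n d \<subseteq> torsion_reps n ?d'"
      using T cyc_rotate_mem_torsion_reps_iff[OF n] by blast
    show "cyc_rotate n ?q ` torsion_reps n ?d' \<subseteq> torsion_reps n d"
      using T cyc_rotate_mem_torsion_reps_iff[OF n, of "cyc_rotate n ?q _" p d]
        cyc_rotate_right_inverse[OF n] cyc_rotate_in_int_vecs by fastforce
  qed
  moreover have "(\<lambda>i. x i - y i) \<in> cyc_image n d \<longleftrightarrow>
      (\<lambda>i. cyc_rotate n p x i - cyc_rotate n p y i) \<in> cyc_image n ?d'"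
    if "x \<in> torsion_reps n d" "y \<in> torsion_reps n d" for x y
  proof -
    have "x \<in> int_vecs n" "y \<in> int_vecs n" using that T by blast+
    then have "(\<lambda>i. x i - y i) \<in> int_vecs n" by (simp add: int_vecs_def)
    then show ?thesis by (simp add: cyc_rotate_mem_cyc_image_iff[OF n] flip: cyc_rotate_diff)
  qed
  ultimately show ?thesis
    unfolding critical_group_def
    by (intro card_quotient_bij_betw[symmetric]) (auto simp: bij_betw_def)
qed

section \<open>Continuants and the order of the critical group\<close>

fun continuant :: "(nat \<Rightarrow> nat) \<Rightarrow> nat \<Rightarrow> int" where
  "continuant D 0 = 0"
| "continuant D (Suc 0) = 1"
| "continuant D (Suc (Suc j)) = int (D (Suc j)) * continuant D (Suc j) - continuant D j"

fun continuant_inhom :: "(nat \<Rightarrow> nat) \<Rightarrow> (nat \<Rightarrow> int) \<Rightarrow> nat \<Rightarrow> int" where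
  "continuant_inhom D y 0 = 0"
| "continuant_inhom D y (Suc 0) = 0"
| "continuant_inhom D y (Suc (Suc j)) =
     int (D (Suc j)) * continuant_inhom D y (Suc j) - continuant_inhom D y j - y (Suc j)"

lemma continuant_inhom_wronskian:
  "continuant D j * continuant_inhom D y (Suc j) - continuant_inhom D y j * continuant D (Suc j) =
     - (\<Sum>i<Suc j. continuant D i * y i)"
proof (induction j)
  case (Suc j)
  have "continuant D (Suc j) * continuant_inhom D y (Suc (Suc j))
          - continuant_inhom D y (Suc j) * continuant D (Suc (Suc j))
      = (continuant D j * continuant_inhom D y (Suc j) - continuant_inhom D y j * continuant D (Suc j))
          - continuant D (Suc j) * y (Suc j)"
    by (simp add: algebra_simps)
  then show ?case using Suc by simp
qed simp

lemma periodic_mod: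
  fixes n :: nat
  assumes "\<And>j. f (j + n) = f j"
  shows "f (j mod n) = f j"
proof -
  have "f (j mod n + q * n) = f (j mod n)" for q
  proof (induction q)
    case (Suc q)
    have "j mod n + Suc q * n = (j mod n + q * n) + n" by simp
    then show ?case using Suc assms by metis
  qed simp
  from this[of "j div n"] show ?thesis by (simp add: mod_div_mult_eq)
qed

text \<open>An arithmetical structure on \<open>C\<^sub>n\<close>, extended periodically to all of \<open>\<nat>\<close> (so that the
  continuants can be computed along the path \<open>0, \<dots>, n\<close>) and labelled so that \<open>r 0 = 1\<close>.\<close>

locale normalized_cycle_struct =
  fixes n :: nat and r d :: "nat \<Rightarrow> nat"
  assumes two_le_n: "2 \<le> n" and r_pos: "\<And>j. 0 < r j"
    and r_periodic: "\<And>j. r (j + n) = r j" and d_periodic: "\<And>j. d (j + n) = d j"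
    and balance: "\<And>j. d (Suc j) * r (Suc j) = r j + r (Suc (Suc j))"
    and r_0: "r 0 = 1"
begin

definition crit_order :: int where
  "crit_order = continuant d n"

definition crit_hom :: "(nat \<Rightarrow> int) \<Rightarrow> int" where
  "crit_hom y = (\<Sum>j<n. continuant d j * y j)"

definition r_perp :: "(nat \<Rightarrow> int) set" where
  "r_perp = {y \<in> int_vecs n. (\<Sum>j<n. int (r j) * y j) = 0}"

lemma n_pos: "0 < n"
  using two_le_n by simp

lemma r_n: "r n = 1"
  using r_periodic[of 0] r_0 by simp

lemma balance_int: "int (d (Suc j)) * int (r (Suc j)) = int (r j) + int (r (Suc (Suc j)))"
  using balance[of j] by (metis of_nat_add of_nat_mult)

lemma r_continuant_wronskian: "int (r j) * continuant d (Suc j) - int (r (Suc j)) * continuant d j = 1"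
proof (induction j)
  case (Suc j)
  have "int (r (Suc j)) * continuant d (Suc (Suc j)) - int (r (Suc (Suc j))) * continuant d (Suc j)
      = (int (d (Suc j)) * int (r (Suc j))) * continuant d (Suc j) - int (r (Suc j)) * continuant d j
          - int (r (Suc (Suc j))) * continuant d (Suc j)"
    by (simp add: algebra_simps)
  also have "\<dots> = int (r j) * continuant d (Suc j) - int (r (Suc j)) * continuant d j"
    unfolding balance_int by (simp add: algebra_simps)
  finally show ?case using Suc by simp
qed (simp add: r_0)

lemma continuant_div_r:
  "real_of_int (continuant d j) / real (r j) = (\<Sum>i<j. 1 / (real (r i) * real (r (Suc i))))"
proof (induction j)
  case (Suc j)
  have pos: "real (r j) > 0" "real (r (Suc j)) > 0" using r_pos by auto
  have w: "real (r j) * real_of_int (continuant d (Suc j)) = real (r (Suc j)) * real_of_int (continuant d j) + 1"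
    using arg_cong[OF r_continuant_wronskian[of j], of real_of_int] by simp
  have "real_of_int (continuant d (Suc j)) / real (r (Suc j))
      = real_of_int (continuant d j) / real (r j) + 1 / (real (r j) * real (r (Suc j)))"
    using pos by (simp add: field_simps w)
  then show ?case using Suc by simp
qed simp

lemma r_mod: "r (j mod n) = r j"
  by (rule periodic_mod) (rule r_periodic)

lemma crit_order_eq_sum: "real_of_int crit_order = (\<Sum>i<n. 1 / (real (r i) * real (r (cyc_next n i))))"
  using continuant_div_r[of n] by (simp add: crit_order_def r_n cyc_next_def r_mod)

lemma crit_order_pos: "0 < crit_order"
proof -
  have "0 < (\<Sum>i<n. 1 / (real (r i) * real (r (cyc_next n i))))"
    using n_pos r_pos by (intro sum_pos) auto
  then show ?thesis using crit_order_eq_sum by simp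
qed

lemma continuant_n_minus_1: "continuant d (n - 1) = int (r (n - 1)) * crit_order - 1"
  using r_continuant_wronskian[of "n - 1"] n_pos by (simp add: crit_order_def r_n)

lemma balance_cyc:
  assumes "i < n"
  shows "int (d i) * int (r i) = int (r (cyc_prev n i)) + int (r (cyc_next n i))"
proof (cases i)
  case 0
  have "int (d n) * int (r n) = int (r (n - 1)) + int (r (Suc n))"
    using balance_int[of "n - 1"] n_pos by simp
  then show ?thesis
    using 0 two_le_n d_periodic[of 0] r_periodic[of 0] r_periodic[of 1]
    by (simp add: cyc_prev_0 cyc_next_Suc)
next
  case (Suc m)
  then show ?thesis
    using assms balance_int[of m] cyc_prev_pos[of i n] by (simp add: cyc_next_def r_mod)
qed

text \<open>Row \<open>i\<close> of \<open>diag(d) - A\<close> applied to the continuants vanishes for \<open>0 < i < n - 1\<close> by the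
  recurrence; in rows \<open>0\<close> and \<open>n - 1\<close>, where the path closes up, \<open>continuant_n_minus_1\<close> leaves
  a multiple of \<open>crit_order\<close>.\<close>

lemma crit_order_dvd_row:
  assumes "i < n"
  shows "crit_order dvd int (d i) * continuant d i - continuant d (cyc_prev n i) - continuant d (cyc_next n i)"
proof (cases "i = 0")
  case True
  then show ?thesis
    using two_le_n continuant_n_minus_1 by (simp add: cyc_prev_0 cyc_next_Suc)
next
  case False
  have rec: "int (d i) * continuant d i - continuant d (i - 1) = continuant d (Suc i)"
    using False by (cases i) auto
  show ?thesis
  proof (cases "Suc i < n")
    case True
    then show ?thesis using False rec assms by (simp add: cyc_prev_pos cyc_next_Suc)
  next
    case False
    then have "Suc i = n" using assms by simp
    then show ?thesis
      using \<open>i \<noteq> 0\<close> rec assms by (simp add: cyc_prev_pos cyc_next_last crit_order_def)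
  qed
qed

lemma crit_order_dvd_crit_hom_image: "crit_order dvd crit_hom (cyc_mat_apply n d x)"
  unfolding crit_hom_def sum_mult_cyc_mat_apply[OF n_pos]
  by (rule dvd_sum) (simp add: crit_order_dvd_row)

lemma cyc_image_subset_r_perp: "cyc_image n d \<subseteq> r_perp"
proof
  fix y assume "y \<in> cyc_image n d"
  then obtain x where "y = cyc_mat_apply n d x" by (auto simp: cyc_image_def)
  moreover have "(\<Sum>j<n. int (r j) * cyc_mat_apply n d x j) = 0"
    by (rule sum_mult_cyc_mat_apply_eq_0[OF n_pos]) (simp add: balance_cyc)
  ultimately show "y \<in> r_perp" by (simp add: r_perp_def cyc_mat_apply_in_int_vecs)
qed

text \<open>Rows \<open>1, \<dots>, n - 1\<close> form a recurrence along the path \<open>0, \<dots>, n\<close> whose solutions with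
  \<open>X 0 = 0\<close> are \<open>continuant_inhom - t * continuant\<close>; by the Wronskian identity, \<open>crit_order\<close>
  dividing \<open>crit_hom y\<close> is what allows \<open>t\<close> to be chosen so that also \<open>X n = 0\<close>.\<close>

lemma solve_rows:
  assumes "crit_order dvd crit_hom y"
  obtains x where "x \<in> int_vecs n" "\<And>j. 0 < j \<Longrightarrow> j < n \<Longrightarrow> cyc_mat_apply n d x j = y j"
proof -
  let ?P = "continuant_inhom d y"
  have "continuant d (n - 1) * ?P n - ?P (n - 1) * crit_order = - crit_hom y"
    using continuant_inhom_wronskian[of d "n - 1" y] n_pos
    by (simp add: crit_hom_def crit_order_def)
  then have "?P n = crit_hom y + crit_order * (int (r (n - 1)) * ?P n - ?P (n - 1))"
    unfolding continuant_n_minus_1 by (simp add: algebra_simps)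
  moreover define c where "c = int (r (n - 1)) * ?P n - ?P (n - 1)"
  ultimately have "?P n = crit_hom y + crit_order * c"
    by simp
  then have "crit_order dvd ?P n"
    using assms by simp
  then obtain t where t: "?P n = crit_order * t" by (rule dvdE)
  define X where "X j = ?P j - t * continuant d j" for j
  have X_rec: "X (Suc (Suc j)) = int (d (Suc j)) * X (Suc j) - X j - y (Suc j)" for j
    by (simp add: X_def algebra_simps)
  have X_0: "X 0 = 0" and X_n: "X n = 0"
    using t by (simp_all add: X_def crit_order_def)
  define x where "x j = (if j < n then X j else 0)" for j
  have "cyc_mat_apply n d x j = y j" if j: "0 < j" "j < n" for j
  proof -
    have "x (cyc_next n j) = X (Suc j)"
    proof (cases "Suc j < n")
      case False
      then have "Suc j = n" using j by simp
      then show ?thesis using X_0 X_n n_pos by (simp add: x_def cyc_next_last)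
    qed (simp add: x_def cyc_next_Suc)
    moreover have "X (Suc j) = int (d j) * X j - X (j - 1) - y j"
      using X_rec[of "j - 1"] j by simp
    ultimately show ?thesis
      using j X_0 by (simp add: cyc_mat_apply_def x_def cyc_prev_pos)
  qed
  moreover have "x \<in> int_vecs n" by (simp add: int_vecs_def x_def)
  ultimately show ?thesis using that by blast
qed

lemma mem_cyc_image_iff:
  assumes y: "y \<in> r_perp"
  shows "y \<in> cyc_image n d \<longleftrightarrow> crit_order dvd crit_hom y"
proof
  assume "y \<in> cyc_image n d"
  then show "crit_order dvd crit_hom y"
    using crit_order_dvd_crit_hom_image by (auto simp: cyc_image_def)
next
  assume "crit_order dvd crit_hom y"
  then obtain x where x: "x \<in> int_vecs n" and rows: "\<And>j. 0 < j \<Longrightarrow> j < n \<Longrightarrow> cyc_mat_apply n d x j = y j"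
    by (rule solve_rows) auto
  \<comment> \<open>Row \<open>0\<close> then holds as well, since both sides are orthogonal to \<open>r\<close> and \<open>r 0 = 1\<close>.\<close>
  have "cyc_mat_apply n d x \<in> r_perp"
    using x cyc_image_subset_r_perp by (auto simp: cyc_image_def)
  then have "0 = (\<Sum>j<n. int (r j) * (cyc_mat_apply n d x j - y j))"
    using y by (simp add: r_perp_def right_diff_distrib sum_subtractf)
  also have "\<dots> = int (r 0) * (cyc_mat_apply n d x 0 - y 0)
      + (\<Sum>j\<in>{..<n} - {0}. int (r j) * (cyc_mat_apply n d x j - y j))"
    using n_pos by (intro sum.remove) auto
  also have "\<dots> = cyc_mat_apply n d x 0 - y 0"
    using r_0 by (simp add: rows sum.neutral)
  finally have row_0: "cyc_mat_apply n d x 0 = y 0" by simp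
  have "cyc_mat_apply n d x j = y j" for j
  proof (cases "j < n")
    case True
    then show ?thesis using row_0 rows by (cases j) auto
  next
    case False
    then show ?thesis using y by (simp add: r_perp_def int_vecs_def cyc_mat_apply_def)
  qed
  then have "cyc_mat_apply n d x = y" ..
  then show "y \<in> cyc_image n d"
    using x by (metis cyc_image_def image_eqI)
qed

lemma crit_hom_diff: "crit_hom (\<lambda>i. x i - y i) = crit_hom x - crit_hom y"
  by (simp add: crit_hom_def sum_subtractf right_diff_distrib)

lemma crit_hom_scale: "crit_hom (\<lambda>i. m * x i) = m * crit_hom x"
  by (simp add: crit_hom_def sum_distrib_left algebra_simps)

lemma r_perp_diff: "x \<in> r_perp \<Longrightarrow> y \<in> r_perp \<Longrightarrow> (\<lambda>i. x i - y i) \<in> r_perp"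
  by (simp add: r_perp_def int_vecs_def sum_subtractf right_diff_distrib)

lemma r_perp_scale: "x \<in> r_perp \<Longrightarrow> (\<lambda>i. m * x i) \<in> r_perp"
  by (simp add: r_perp_def int_vecs_def mult.left_commute flip: sum_distrib_left)

definition crit_gen :: "nat \<Rightarrow> int" where
  "crit_gen j = (if j = 1 then 1 else 0) - (if j = 0 then int (r 1) else 0)"

lemma crit_gen_in_r_perp: "crit_gen \<in> r_perp"
proof -
  have "(\<Sum>j<n. int (r j) * crit_gen j) =
      (\<Sum>j<n. (if j = 1 then int (r 1) else 0) - (if j = 0 then int (r 1) else 0))"
    by (rule sum.cong) (auto simp: crit_gen_def r_0)
  also have "\<dots> = 0"
    using two_le_n by (simp add: sum_subtractf)
  finally show ?thesis using two_le_n by (simp add: r_perp_def int_vecs_def crit_gen_def)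
qed

lemma crit_hom_crit_gen: "crit_hom crit_gen = 1"
proof -
  have "crit_hom crit_gen =
      (\<Sum>j<n. (if j = 1 then 1 else 0) - (if j = 0 then continuant d 0 * int (r 1) else 0))"
    unfolding crit_hom_def by (rule sum.cong) (auto simp: crit_gen_def)
  also have "\<dots> = 1"
    using two_le_n by (simp add: sum_subtractf)
  finally show ?thesis .
qed

lemma torsion_reps_eq_r_perp: "torsion_reps n d = r_perp"
proof
  show "torsion_reps n d \<subseteq> r_perp"
  proof
    fix y assume "y \<in> torsion_reps n d"
    then obtain m where y: "y \<in> int_vecs n" "0 < m" "(\<lambda>i. m * y i) \<in> cyc_image n d"
      by (auto simp: torsion_reps_def)
    then have "m * (\<Sum>j<n. int (r j) * y j) = 0"
      using cyc_image_subset_r_perp by (auto simp: r_perp_def sum_distrib_left algebra_simps)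
    then show "y \<in> r_perp" using y by (simp add: r_perp_def)
  qed
  show "r_perp \<subseteq> torsion_reps n d"
  proof
    fix y assume y: "y \<in> r_perp"
    then have "(\<lambda>i. crit_order * y i) \<in> cyc_image n d"
      by (simp add: mem_cyc_image_iff r_perp_scale crit_hom_scale)
    then show "y \<in> torsion_reps n d"
      using y crit_order_pos by (auto simp: torsion_reps_def r_perp_def)
  qed
qed

lemma diff_mem_cyc_image_iff:
  "x \<in> r_perp \<Longrightarrow> y \<in> r_perp \<Longrightarrow>
    (\<lambda>i. x i - y i) \<in> cyc_image n d \<longleftrightarrow> crit_hom x mod crit_order = crit_hom y mod crit_order"
  by (simp add: mem_cyc_image_iff r_perp_diff crit_hom_diff mod_eq_dvd_iff)

lemma crit_hom_mod_image: "(\<lambda>x. crit_hom x mod crit_order) ` r_perp = {0..<crit_order}"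
proof
  show "(\<lambda>x. crit_hom x mod crit_order) ` r_perp \<subseteq> {0..<crit_order}"
    using crit_order_pos by auto
  show "{0..<crit_order} \<subseteq> (\<lambda>x. crit_hom x mod crit_order) ` r_perp"
  proof
    fix a assume "a \<in> {0..<crit_order}"
    then have "crit_hom (\<lambda>i. a * crit_gen i) mod crit_order = a"
      by (simp add: crit_hom_scale crit_hom_crit_gen)
    then show "a \<in> (\<lambda>x. crit_hom x mod crit_order) ` r_perp"
      using r_perp_scale[OF crit_gen_in_r_perp] by (metis image_eqI)
  qed
qed

lemma card_critical_group: "card (critical_group n d) = nat crit_order"
proof -
  have "card (critical_group n d) = card ((\<lambda>x. crit_hom x mod crit_order) ` r_perp)"
    unfolding critical_group_def torsion_reps_eq_r_perp
    by (rule card_quotient_eq_card_image) (auto simp: diff_mem_cyc_image_iff)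
  then show ?thesis by (simp add: crit_hom_mod_image)
qed

end

lemma normalized_cycle_struct_rotate:
  assumes n: "2 \<le> n" and rd: "arith_struct n r d" and p: "p < n" "r p = 1"
  shows "normalized_cycle_struct n (\<lambda>j. r ((p + j) mod n)) (\<lambda>j. d ((p + j) mod n))"
proof
  have n0: "0 < n" using n by simp
  show "2 \<le> n" by (rule n)
  show "0 < r ((p + j) mod n)" for j
    using rd n0 by (simp add: arith_struct_def)
  show "r ((p + (j + n)) mod n) = r ((p + j) mod n)" "d ((p + (j + n)) mod n) = d ((p + j) mod n)" for j
    by (simp_all add: add.assoc[symmetric])
  show "r ((p + 0) mod n) = 1" using p by simp
  fix j
  have next_mod: "cyc_next n ((p + i) mod n) = (p + Suc i) mod n" for i
    by (simp add: cyc_next_def mod_Suc_eq)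
  then have "cyc_prev n ((p + Suc j) mod n) = (p + j) mod n"
    using cyc_prev_next[of "(p + j) mod n" n] n0 by simp
  moreover have "cyc_next n ((p + Suc j) mod n) = (p + Suc (Suc j)) mod n"
    by (rule next_mod)
  ultimately show "d ((p + Suc j) mod n) * r ((p + Suc j) mod n) =
      r ((p + j) mod n) + r ((p + Suc (Suc j)) mod n)"
    using rd n0 by (simp add: arith_struct_def)
qed

lemma card_critical_group_eq_sum:
  assumes "2 \<le> n" and "arith_struct n r d" and "p < n" "r p = 1"
  shows "real (card (critical_group n d)) = (\<Sum>i<n. 1 / (real (r i) * real (r (cyc_next n i))))"
proof -
  have n0: "0 < n" using assms(1) by simp
  interpret normalized_cycle_struct n "\<lambda>j. r ((p + j) mod n)" "\<lambda>j. d ((p + j) mod n)"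
    by (rule normalized_cycle_struct_rotate[OF assms])
  have "real (card (critical_group n d)) = real_of_int crit_order"
    using card_critical_group crit_order_pos card_critical_group_rotate[OF n0] by simp
  also have "\<dots> = (\<Sum>i<n. 1 / (real (r ((p + i) mod n)) * real (r (cyc_next n ((p + i) mod n)))))"
    by (simp add: crit_order_eq_sum cyc_next_add_mod)
  also have "\<dots> = (\<Sum>i<n. 1 / (real (r i) * real (r (cyc_next n i))))"
    by (rule sum_add_mod[OF n0])
  finally show ?thesis .
qed

section \<open>Smoothing\<close>

definition cyc_recip_sum :: "nat list \<Rightarrow> real" where
  "cyc_recip_sum xs = (\<Sum>i<length xs. 1 / (real (xs ! i) * real (xs ! cyc_next (length xs) i)))"

definition arith_cycle :: "nat list \<Rightarrow> bool" where
  "arith_cycle xs \<longleftrightarrow>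
     (\<forall>i<length xs. 0 < xs ! i \<and> xs ! i dvd xs ! cyc_prev (length xs) i + xs ! cyc_next (length xs) i)
     \<and> Gcd (set xs) = 1"

lemma nth_rotate_cyc_next:
  assumes "i < length xs"
  shows "rotate s xs ! cyc_next (length xs) i = xs ! cyc_next (length xs) ((s + i) mod length xs)"
proof -
  have "0 < length xs" using assms by linarith
  then show ?thesis by (simp add: nth_rotate cyc_next_less cyc_next_add_mod)
qed

lemma nth_rotate_cyc_prev:
  assumes "i < length xs"
  shows "rotate s xs ! cyc_prev (length xs) i = xs ! cyc_prev (length xs) ((s + i) mod length xs)"
proof -
  have "0 < length xs" using assms by linarith
  then show ?thesis by (simp add: nth_rotate cyc_prev_less cyc_prev_add_mod)
qed

lemma cyc_recip_sum_rotate: "cyc_recip_sum (rotate s xs) = cyc_recip_sum xs"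
proof (cases "xs = []")
  case False
  then have "0 < length xs" by simp
  then show ?thesis
    unfolding cyc_recip_sum_def
    using sum_add_mod[of "length xs" "\<lambda>i. 1 / (real (xs ! i) * real (xs ! cyc_next (length xs) i))" s]
    by (simp add: nth_rotate nth_rotate_cyc_next)
qed simp

lemma arith_cycle_rotate:
  assumes "arith_cycle xs"
  shows "arith_cycle (rotate s xs)"
proof -
  have "(s + i) mod length xs < length xs" if "i < length xs" for i
    using that by (intro mod_less_divisor) linarith
  then show ?thesis
    using assms unfolding arith_cycle_def
    by (simp add: nth_rotate nth_rotate_cyc_next nth_rotate_cyc_prev)
qed

lemma rotate_inverse: "\<exists>t. rotate t (rotate s xs) = xs"
proof (cases "xs = []")
  case False
  then have "(length xs - s mod length xs + s) mod length xs = 0"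
    using add_mod_inverse[of "length xs" s] by (simp add: add.commute)
  then show ?thesis by (metis rotate_rotate rotate_id)
qed simp

lemma arith_cycle_rotate_iff: "arith_cycle (rotate s xs) \<longleftrightarrow> arith_cycle xs"
  using arith_cycle_rotate rotate_inverse by metis

lemma rotate_Suc_remove_nth:
  assumes "i < length xs"
  shows "rotate (Suc i) xs = rotate i (take i xs @ drop (Suc i) xs) @ [xs ! i]"
proof -
  have "rotate (Suc i) xs = drop (Suc i) xs @ take (Suc i) xs"
    using rotate_append[of "take (Suc i) xs" "drop (Suc i) xs"] assms by simp
  moreover have "rotate i (take i xs @ drop (Suc i) xs) = drop (Suc i) xs @ take i xs"
    using rotate_append[of "take i xs" "drop (Suc i) xs"] assms by simp
  ultimately show ?thesis
    using assms by (simp add: take_Suc_conv_app_nth)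
qed

lemma cyc_recip_sum_path:
  assumes "xs \<noteq> []"
  shows "cyc_recip_sum xs =
    (\<Sum>i<length xs - 1. 1 / (real (xs ! i) * real (xs ! Suc i))) + 1 / (real (last xs) * real (hd xs))"
proof -
  obtain m where m: "length xs = Suc m" using assms by (cases xs) auto
  have "(\<Sum>i<m. 1 / (real (xs ! i) * real (xs ! cyc_next (Suc m) i))) =
      (\<Sum>i<m. 1 / (real (xs ! i) * real (xs ! Suc i)))"
    by (rule sum.cong) (simp_all add: cyc_next_Suc)
  then show ?thesis
    using assms m by (simp add: cyc_recip_sum_def cyc_next_last last_conv_nth hd_conv_nth)
qed

lemma cyc_recip_sum_snoc:
  assumes ne: "zs \<noteq> []" and pos: "\<forall>z\<in>set zs. 0 < z"
  shows "cyc_recip_sum (zs @ [last zs + hd zs]) = cyc_recip_sum zs"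
proof -
  let ?c = "last zs + hd zs" and ?g = "\<lambda>a b. 1 / (real a * real b)"
  have split: "?g (last zs) ?c + ?g ?c (hd zs) = ?g (last zs) (hd zs)"
  proof -
    have "0 < real (last zs)" "0 < real (hd zs)" using ne pos by simp_all
    then show ?thesis by (simp add: divide_simps)
  qed
  have "(\<Sum>i<length zs. ?g ((zs @ [?c]) ! i) ((zs @ [?c]) ! Suc i)) =
      (\<Sum>i<length zs - 1. ?g (zs ! i) (zs ! Suc i)) + ?g (last zs) ?c"
  proof -
    obtain m where m: "length zs = Suc m" using ne by (cases zs) auto
    have "(\<Sum>i<m. ?g ((zs @ [?c]) ! i) ((zs @ [?c]) ! Suc i)) = (\<Sum>i<m. ?g (zs ! i) (zs ! Suc i))"
      by (rule sum.cong) (simp_all add: nth_append m)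
    then show ?thesis using ne m by (simp add: nth_append last_conv_nth)
  qed
  then show ?thesis
    using ne split by (simp add: cyc_recip_sum_path)
qed

lemma nth_snoc_cyc_prev:
  fixes zs :: "nat list"
  assumes "zs \<noteq> []" and j: "j < length zs"
  shows "(zs @ [last zs + hd zs]) ! cyc_prev (Suc (length zs)) j =
    zs ! cyc_prev (length zs) j + (if j = 0 then zs ! j else 0)"
proof (cases "j = 0")
  case True
  then show ?thesis
    using assms by (simp add: cyc_prev_0 last_conv_nth hd_conv_nth)
next
  case False
  moreover have "j - 1 < length zs" using j by simp
  ultimately show ?thesis
    using j by (simp add: cyc_prev_pos nth_append)
qed

lemma nth_snoc_cyc_next:
  fixes zs :: "nat list"
  assumes "zs \<noteq> []" and j: "j < length zs"
  shows "(zs @ [last zs + hd zs]) ! cyc_next (Suc (length zs)) j =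
    zs ! cyc_next (length zs) j + (if Suc j = length zs then zs ! j else 0)"
proof (cases "Suc j = length zs")
  case True
  then have "j = length zs - 1" by simp
  then show ?thesis
    using assms True by (simp add: cyc_next_Suc cyc_next_last last_conv_nth hd_conv_nth add.commute)
next
  case False
  then show ?thesis
    using j by (simp add: cyc_next_Suc nth_append)
qed

lemma arith_cycle_snoc:
  assumes ne: "zs \<noteq> []" and u: "arith_cycle (zs @ [last zs + hd zs])"
  shows "arith_cycle zs"
proof -
  let ?u = "zs @ [last zs + hd zs]"
  have "0 < zs ! j \<and> zs ! j dvd zs ! cyc_prev (length zs) j + zs ! cyc_next (length zs) j"
    if j: "j < length zs" for j
  proof -
    have "0 < ?u ! j \<and> ?u ! j dvd ?u ! cyc_prev (Suc (length zs)) j + ?u ! cyc_next (Suc (length zs)) j"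
      using u j unfolding arith_cycle_def by simp
    moreover have "?u ! j = zs ! j" using j by (simp add: nth_append)
    ultimately have "0 < zs ! j" and
      "zs ! j dvd (zs ! cyc_prev (length zs) j + (if j = 0 then zs ! j else 0))
          + (zs ! cyc_next (length zs) j + (if Suc j = length zs then zs ! j else 0))"
      unfolding nth_snoc_cyc_prev[OF ne j] nth_snoc_cyc_next[OF ne j] by simp_all
    then show ?thesis
      by (auto split: if_splits simp: add.assoc[symmetric]) (simp_all add: ac_simps)
  qed
  moreover have "Gcd (set zs) dvd last zs + hd zs"
    using ne by (simp add: Gcd_dvd)
  then have "Gcd (set zs) = Gcd (set ?u)"
    by (simp add: gcd_nat.absorb2)
  ultimately show ?thesis
    using u by (simp add: arith_cycle_def)
qed

text \<open>Rotating the removed vertex to the end turns a smoothing step into the removal of a last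
  entry that is the sum of its two cyclic neighbours, the last and first entries of what remains.\<close>

lemma smooth_step_rotate:
  assumes "smooth_step xs ys"
  obtains i where "ys \<noteq> []" "rotate (Suc i) xs = rotate i ys @ [last (rotate i ys) + hd (rotate i ys)]"
proof -
  let ?m = "length xs"
  from assms obtain i where i: "i < ?m" and m: "2 \<le> ?m"
    and sum: "xs ! i = xs ! cyc_prev ?m i + xs ! cyc_next ?m i"
    and ys: "ys = take i xs @ drop (Suc i) xs"
    unfolding smooth_step_def by blast
  let ?zs = "rotate i ys"
  have rot: "rotate (Suc i) xs = ?zs @ [xs ! i]"
    using rotate_Suc_remove_nth[OF i] by (simp add: ys)
  have len: "length ?zs = ?m - 1" using i by (simp add: ys)
  then have ne: "ys \<noteq> []" using m by auto
  have nth_zs: "?zs ! j = xs ! ((Suc i + j) mod ?m)" if "j < ?m - 1" for j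
    using nth_rotate[of j xs "Suc i"] that rot len by (simp add: nth_append)
  have "hd ?zs = xs ! cyc_next ?m i"
    using nth_zs[of 0] ne m by (simp add: hd_conv_nth cyc_next_def)
  moreover have "last ?zs = xs ! cyc_prev ?m i"
  proof -
    obtain k where k: "?m = Suc (Suc k)" using m by (metis add_2_eq_Suc le_Suc_ex)
    then have "Suc i + k = i + ?m - 1" by simp
    then show ?thesis
      using nth_zs[of k] ne k len by (simp add: last_conv_nth cyc_prev_def)
  qed
  ultimately have "rotate (Suc i) xs = ?zs @ [last ?zs + hd ?zs]"
    using rot sum by (simp add: add.commute)
  with ne that show ?thesis by blast
qed

lemma smooth_step_length: "smooth_step xs ys \<Longrightarrow> length ys = length xs - 1"
  by (auto simp: smooth_step_def)

lemma smooth_step_nonempty: "smooth_step xs ys \<Longrightarrow> ys \<noteq> []"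
  by (auto simp: smooth_step_def)

lemma smooth_step_set: "smooth_step xs ys \<Longrightarrow> set ys \<subseteq> set xs"
  by (auto simp: smooth_step_def dest: in_set_takeD in_set_dropD)

lemma smooth_step_cyc_recip_sum:
  assumes "smooth_step xs ys" and "\<forall>x\<in>set xs. 0 < x"
  shows "cyc_recip_sum ys = cyc_recip_sum xs"
proof -
  obtain i where ne: "ys \<noteq> []"
    and rot: "rotate (Suc i) xs = rotate i ys @ [last (rotate i ys) + hd (rotate i ys)]"
    using smooth_step_rotate[OF assms(1)] by blast
  have pos: "\<forall>z\<in>set (rotate i ys). 0 < z" using assms smooth_step_set by auto
  have "cyc_recip_sum ys = cyc_recip_sum (rotate i ys)"
    by (simp only: cyc_recip_sum_rotate)
  also have "\<dots> = cyc_recip_sum (rotate (Suc i) xs)"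
    unfolding rot using ne pos by (simp add: cyc_recip_sum_snoc)
  also have "\<dots> = cyc_recip_sum xs"
    by (simp only: cyc_recip_sum_rotate)
  finally show ?thesis .
qed

lemma smooth_step_arith_cycle:
  assumes "smooth_step xs ys" and "arith_cycle xs"
  shows "arith_cycle ys"
proof -
  obtain i where ne: "ys \<noteq> []"
    and rot: "rotate (Suc i) xs = rotate i ys @ [last (rotate i ys) + hd (rotate i ys)]"
    using smooth_step_rotate[OF assms(1)] by blast
  have "arith_cycle (rotate i ys @ [last (rotate i ys) + hd (rotate i ys)])"
    using assms(2) arith_cycle_rotate_iff[of "Suc i" xs] by (simp only: rot)
  then show ?thesis
    using ne arith_cycle_snoc[of "rotate i ys"] by (simp add: arith_cycle_rotate_iff)
qed

lemma smooth_steps_set: "smooth_step\<^sup>*\<^sup>* xs ys \<Longrightarrow> set ys \<subseteq> set xs"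
  by (induction rule: rtranclp_induct) (auto dest: smooth_step_set)

lemma smooth_steps_length: "smooth_step\<^sup>*\<^sup>* xs ys \<Longrightarrow> length ys \<le> length xs"
  by (induction rule: rtranclp_induct) (auto dest: smooth_step_length)

lemma smooth_steps_nonempty: "smooth_step\<^sup>*\<^sup>* xs ys \<Longrightarrow> xs \<noteq> [] \<Longrightarrow> ys \<noteq> []"
  by (induction rule: rtranclp_induct) (auto dest: smooth_step_nonempty)

lemma smooth_steps_cyc_recip_sum:
  "smooth_step\<^sup>*\<^sup>* xs ys \<Longrightarrow> \<forall>x\<in>set xs. 0 < x \<Longrightarrow> cyc_recip_sum ys = cyc_recip_sum xs"
proof (induction rule: rtranclp_induct)
  case (step ys zs)
  then show ?case using smooth_steps_set smooth_step_cyc_recip_sum by (metis subsetD)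
qed simp

lemma cyc_next_induct:
  assumes "i\<^sub>0 < m" "P i\<^sub>0" and step: "\<And>i. i < m \<Longrightarrow> P i \<Longrightarrow> P (cyc_next m i)" and "j < m"
  shows "P j"
proof -
  have "P ((i\<^sub>0 + t) mod m)" for t
  proof (induction t)
    case (Suc t)
    have "(i\<^sub>0 + Suc t) mod m = cyc_next m ((i\<^sub>0 + t) mod m)"
      by (simp add: cyc_next_def mod_Suc_eq)
    then show ?case using Suc step assms(1) by simp
  qed (use assms in simp)
  moreover have "(i\<^sub>0 + (j + m - i\<^sub>0)) mod m = j" using assms by simp
  ultimately show ?thesis by metis
qed

lemma dvd_less_double_eq: "(M::nat) dvd s \<Longrightarrow> 0 < s \<Longrightarrow> s < 2 * M \<Longrightarrow> s = M"
proof (elim dvdE)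
  fix q assume "s = M * q" "0 < s" "s < 2 * M"
  then have "0 < q" "q < 2" by simp_all
  then show "s = M" using \<open>s = M * q\<close> by (simp add: numeral_2_eq_2 less_Suc_eq)
qed

lemma arith_cycle_ex_smooth_step:
  assumes ar: "arith_cycle xs" and not_ones: "\<exists>y\<in>set xs. y \<noteq> 1"
  shows "\<exists>ys. smooth_step xs ys"
proof -
  let ?m = "length xs"
  define M where "M = Max (set xs)"
  have pos: "\<forall>i<?m. 0 < xs ! i" and dvd: "\<forall>i<?m. xs ! i dvd xs ! cyc_prev ?m i + xs ! cyc_next ?m i"
    and gcd: "Gcd (set xs) = 1"
    using ar by (simp_all add: arith_cycle_def)
  have ne: "xs \<noteq> []" and m: "0 < ?m" using not_ones by auto
  have le_M: "xs ! i \<le> M" if "i < ?m" for i using that by (simp add: M_def)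
  obtain i where i: "i < ?m" "xs ! i = M" "xs ! cyc_next ?m i \<noteq> M"
  proof (rule ccontr)
    assume "\<not> thesis"
    then have "\<forall>i<?m. xs ! i = M \<longrightarrow> xs ! cyc_next ?m i = M" using that by blast
    moreover obtain i\<^sub>0 where "i\<^sub>0 < ?m" "xs ! i\<^sub>0 = M"
      using Max_in[of "set xs"] ne by (auto simp: M_def in_set_conv_nth)
    ultimately have "\<forall>j<?m. xs ! j = M"
      using cyc_next_induct[of _ ?m "\<lambda>j. xs ! j = M"] by blast
    then have "\<forall>y\<in>set xs. y = M" by (auto simp: in_set_conv_nth)
    then have "set xs = {M}" using ne by (auto simp: neq_Nil_conv)
    then show False using gcd not_ones by simp
  qed
  let ?a = "xs ! cyc_prev ?m i" and ?b = "xs ! cyc_next ?m i"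
  have "?a + ?b = M"
  proof (rule dvd_less_double_eq)
    show "M dvd ?a + ?b" using dvd i by metis
    show "0 < ?a + ?b" using pos m by (simp add: cyc_prev_less)
    have "?b < M" using le_M[OF cyc_next_less[OF m, of i]] i(3) by simp
    then show "?a + ?b < 2 * M" using le_M[OF cyc_prev_less[OF m, of i]] by simp
  qed
  moreover have "2 \<le> ?m"
    using i by (cases "?m = 1") (auto simp: cyc_next_def)
  ultimately have "smooth_step xs (take i xs @ drop (Suc i) xs)"
    using i by (auto simp: smooth_step_def)
  then show ?thesis ..
qed

lemma arith_cycle_smooth_to_ones:
  "arith_cycle xs \<Longrightarrow> \<exists>ys. smooth_step\<^sup>*\<^sup>* xs ys \<and> (\<forall>y\<in>set ys. y = 1)"
proof (induction "length xs" arbitrary: xs rule: less_induct)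
  case less
  show ?case
  proof (cases "\<forall>y\<in>set xs. y = 1")
    case False
    then obtain ys where step: "smooth_step xs ys"
      using arith_cycle_ex_smooth_step[OF less.prems] by blast
    moreover have "length ys < length xs"
      using step by (auto simp: smooth_step_def)
    ultimately obtain zs where "smooth_step\<^sup>*\<^sup>* ys zs" "\<forall>y\<in>set zs. y = 1"
      using less.hyps smooth_step_arith_cycle less.prems by blast
    then show ?thesis using step by (meson converse_rtranclp_into_rtranclp)
  qed blast
qed

lemma cyc_recip_sum_ones:
  assumes "\<forall>y\<in>set ys. y = 1"
  shows "cyc_recip_sum ys = real (length ys)"
proof -
  have "ys ! j = 1" if "j < length ys" for j
    using assms that by simp
  moreover have "cyc_next (length ys) i < length ys" if "i < length ys" for i
    using that by (intro cyc_next_less) linarith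
  ultimately show ?thesis by (simp add: cyc_recip_sum_def)
qed

lemma smooth_steps_ones_length:
  assumes "smooth_step\<^sup>*\<^sup>* xs ys" and "\<forall>x\<in>set xs. 0 < x" and "\<forall>y\<in>set ys. y = 1"
  shows "real (length ys) = cyc_recip_sum xs"
  using cyc_recip_sum_ones[OF assms(3)] smooth_steps_cyc_recip_sum[OF assms(1,2)] by simp

lemma arith_cycle_of_arith_struct:
  assumes "0 < n" and "arith_struct n r d"
  shows "arith_cycle (map r [0..<n])"
proof -
  have "r i dvd r (cyc_prev n i) + r (cyc_next n i)" if "i < n" for i
    using assms that by (metis arith_struct_def dvd_triv_right)
  then show ?thesis
    using assms by (simp add: arith_cycle_def arith_struct_def cyc_prev_less cyc_next_less atLeast0LessThan)
qed

lemma cyc_recip_sum_map: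
  "cyc_recip_sum (map r [0..<n]) = (\<Sum>i<n. 1 / (real (r i) * real (r (cyc_next n i))))"
  by (simp add: cyc_recip_sum_def cyc_next_less)

theorem mainTheorem14:
  fixes n :: nat and r d :: "nat \<Rightarrow> nat"
  assumes "3 \<le> n"
    and "arith_struct n r d"
  shows "real (card (critical_group n d)) =
           (\<Sum>i<n. 1 / (real (r i) * real (r (cyc_next n i))))
       \<and> 0 < card (critical_group n d) \<and> card (critical_group n d) \<le> n
       \<and> smooth_step\<^sup>*\<^sup>* (map r [0..<n]) (replicate (card (critical_group n d)) 1)
       \<and> (\<forall>ys. smooth_step\<^sup>*\<^sup>* (map r [0..<n]) ys \<and> (\<forall>y\<in>set ys. y = 1)
              \<longrightarrow> length ys = card (critical_group n d))"
proof -
  let ?xs = "map r [0..<n]" and ?K = "card (critical_group n d)"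
  have n: "0 < n" using assms(1) by simp
  have pos: "\<forall>x\<in>set ?xs. 0 < x" using assms(2) by (auto simp: arith_struct_def)
  obtain ys where ys: "smooth_step\<^sup>*\<^sup>* ?xs ys" "\<forall>y\<in>set ys. y = 1"
    using arith_cycle_smooth_to_ones[OF arith_cycle_of_arith_struct[OF n assms(2)]] by blast
  have ne: "ys \<noteq> []" using smooth_steps_nonempty[OF ys(1)] n by simp
  then obtain p where "p < n" "r p = 1"
    using ys smooth_steps_set[OF ys(1)] by (auto simp: neq_Nil_conv)
  then have card: "real ?K = (\<Sum>i<n. 1 / (real (r i) * real (r (cyc_next n i))))"
    using card_critical_group_eq_sum assms by simp
  have "length zs = ?K" if "smooth_step\<^sup>*\<^sup>* ?xs zs" "\<forall>y\<in>set zs. y = 1" for zs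
    using smooth_steps_ones_length[OF that(1) pos that(2)] card
    by (metis cyc_recip_sum_map of_nat_eq_iff)
  moreover have "replicate (length ys) 1 = ys" using ys(2) by (rule replicate_length_same)
  ultimately show ?thesis
    using card ys ne smooth_steps_length[OF ys(1)] by fastforce
qed

end
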